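(* Let $a_{01},a_{10}>0$, $a_\triangle=a_{01}+a_{10}$, and let $x_\triangle\ge 0$ be a fixed integer. Under $H$, let $\theta\in(0,1)$ have prior $p_H(\theta)=\mathrm{Beta}(\theta\mid a_{01},a_{10})$, and let imaginary data $x_{01}\in\{0,\dots,x_\triangle\}$ have conditional sampling distribution $h(x_{01}\mid x_\triangle,\theta)=\binom{x_\triangle}{x_{01}}\theta^{x_{01}}(1-\theta)^{x_\triangle-x_{01}}$; under $H_0$, $\theta=1/2$. Define $$BF^{Co}_{H,H_0}(x)=\frac{\int_0^1 h(x_{01}\mid x_\triangle,\theta)p_H(\theta)\,d\theta}{h(x_{01}\mid x_\triangle,1/2)}$$ and the conditionally-intrinsic prior $p^{CI}_H(\theta\mid H_0)=p_H(\theta)\,E_\theta\big[BF^{Co}_{H,H_0}(x)^{-1}\big]$, the expectation being with respect to $x_{01}\sim h(\cdot\mid x_\triangle,\theta)$. Then $$p^{CI}_H(\theta\mid H_0)=\sum_{x_{01}=0}^{x_\triangle}\binom{x_\triangle}{x_{01}}\left(\frac12\right)^{x_\triangle}\mathrm{Beta}\big(\theta\mid a_{01}+x_{01},\,a_\triangle-a_{01}+x_\triangle-x_{01}\big).$$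
   Context: $\mathrm{Beta}(\theta\mid A,B)=\theta^{A-1}(1-\theta)^{B-1}/B(A,B)$ denotes the Beta density with parameters $A,B>0$ evaluated at $\theta$, where $B(A,B)=\int_0^1t^{A-1}(1-t)^{B-1}dt$. In the paper's motivation, $\theta$ is the conditional probability of a $0\to1$ swing given a swing in a matched-pair $2\times2$ table, $x_{01}$ and $x_{10}=x_\triangle-x_{01}$ are imaginary off-diagonal counts, and the Beta$(a_{01},a_{10})$ prior arises from a Dirichlet$(a_{00},a_{01},a_{10},a_{11})$ prior on the cell probabilities. *)

theory Defs
  imports "HOL-Analysis.Analysis"
begin

text \<open>Beta density Beta(theta | A, B) = theta^(A-1) (1-theta)^(B-1) / B(A,B),
  with B(A,B) the library Beta function Gamma A Gamma B / Gamma (A+B),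
  which equals the integral of t^(A-1)(1-t)^(B-1) over [0,1] for A,B > 0.\<close>
definition beta_density :: "real \<Rightarrow> real \<Rightarrow> real \<Rightarrow> real" where
  "beta_density A B \<theta> = \<theta> powr (A - 1) * (1 - \<theta>) powr (B - 1) / Beta A B"

definition binom_h :: "nat \<Rightarrow> nat \<Rightarrow> real \<Rightarrow> real" where
  "binom_h x01 xt \<theta> = real (xt choose x01) * \<theta> ^ x01 * (1 - \<theta>) ^ (xt - x01)"

definition BF_Co :: "real \<Rightarrow> real \<Rightarrow> nat \<Rightarrow> nat \<Rightarrow> real" where
  "BF_Co a01 a10 xt x01 =
     integral {0..1} (\<lambda>\<theta>. binom_h x01 xt \<theta> * beta_density a01 a10 \<theta>)
     / binom_h x01 xt (1/2)"

definition CI_prior :: "real \<Rightarrow> real \<Rightarrow> nat \<Rightarrow> real \<Rightarrow> real" where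
  "CI_prior a01 a10 xt \<theta> =
     beta_density a01 a10 \<theta> *
     (\<Sum>x01 = 0..xt. binom_h x01 xt \<theta> * inverse (BF_Co a01 a10 xt x01))"

end

theory Submission
  imports Defs
begin

text \<open>Beta-binomial conjugacy: the product of the binomial likelihood and the
  Beta(a01, a10) prior is a multiple of the Beta posterior, so the marginal
  likelihood is a ratio of Beta functions. The Bayes factor against
  \<theta> = 1/2 therefore equals Beta(a01 + x01, a10 + xt - x01) / (Beta(a01, a10) 2^-xt),
  and in the expectation of its inverse the prior and the likelihood recombine
  into exactly the posterior density, weighted by the binomial probability at 1/2.\<close>

lemma Beta_real_pos: "(a::real) > 0 \<Longrightarrow> b > 0 \<Longrightarrow> Beta a b > 0"
  by (simp add: Beta_def Gamma_real_pos)

lemma has_integral_beta_density: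
  assumes "a > 0" "b > 0"
  shows "(beta_density a b has_integral 1) {0..1}"
proof -
  have "((\<lambda>t. t powr (a - 1) * (1 - t) powr (b - 1) / Beta a b)
          has_integral Beta a b / Beta a b) {0..1}"
    using has_integral_Beta_real[OF assms] by (rule has_integral_divide)
  then show ?thesis
    using Beta_real_pos[OF assms] by (simp add: beta_density_def[abs_def])
qed

lemma binom_h_mult_beta_density:
  fixes a b t :: real
  assumes "a > 0" "b > 0" "0 < t" "t < 1" "k \<le> n"
  shows "binom_h k n t * beta_density a b t =
    real (n choose k) * Beta (a + real k) (b + real (n - k)) / Beta a b *
    beta_density (a + real k) (b + real (n - k)) t"
proof -
  have "t powr (a + real k - 1) = t powr real k * t powr (a - 1)"
    by (simp add: powr_add[symmetric] algebra_simps)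
  also have "\<dots> = t ^ k * t powr (a - 1)"
    using assms by (simp add: powr_realpow)
  finally have t: "t powr (a + real k - 1) = t ^ k * t powr (a - 1)" .
  have "(1 - t) powr (b + real (n - k) - 1) = (1 - t) powr real (n - k) * (1 - t) powr (b - 1)"
    by (simp add: powr_add[symmetric] algebra_simps)
  also have "\<dots> = (1 - t) ^ (n - k) * (1 - t) powr (b - 1)"
    using assms powr_realpow[of "1 - t" "n - k"] by simp
  finally have "(1 - t) powr (b + real (n - k) - 1) = (1 - t) ^ (n - k) * (1 - t) powr (b - 1)" .
  moreover have "Beta (a + real k) (b + real (n - k)) > 0"
    using assms by (simp add: Beta_real_pos)
  ultimately show ?thesis
    using t by (simp add: binom_h_def beta_density_def)
qed

lemma integral_binom_h_mult_beta_density: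
  assumes "a > 0" "b > 0" "k \<le> n"
  shows "integral {0..1} (\<lambda>t. binom_h k n t * beta_density a b t) =
    real (n choose k) * Beta (a + real k) (b + real (n - k)) / Beta a b"
proof -
  let ?c = "real (n choose k) * Beta (a + real k) (b + real (n - k)) / Beta a b"
  have "((\<lambda>t. ?c * beta_density (a + real k) (b + real (n - k)) t) has_integral ?c * 1) {0..1}"
    using assms by (intro has_integral_mult_right has_integral_beta_density) auto
  then have "((\<lambda>t. ?c * beta_density (a + real k) (b + real (n - k)) t) has_integral ?c) {0<..<1}"
    by (simp add: has_integral_Icc_iff_Ioo)
  then have "((\<lambda>t. binom_h k n t * beta_density a b t) has_integral ?c) {0<..<1}"
    by (rule has_integral_cong[THEN iffD1, rotated]) (use binom_h_mult_beta_density assms in auto)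
  then show ?thesis
    by (simp add: has_integral_Icc_iff_Ioo integral_unique)
qed

lemma binom_h_half: "k \<le> n \<Longrightarrow> binom_h k n (1/2) = real (n choose k) * (1/2) ^ n"
  by (simp add: binom_h_def power_add[symmetric])

lemma BF_Co_eq:
  assumes "a01 > 0" "a10 > 0" "k \<le> n"
  shows "BF_Co a01 a10 n k =
    Beta (a01 + real k) (a10 + real (n - k)) / (Beta a01 a10 * (1/2) ^ n)"
  unfolding BF_Co_def integral_binom_h_mult_beta_density[OF assms] binom_h_half[OF \<open>k \<le> n\<close>]
  using \<open>k \<le> n\<close> by (simp add: field_simps del: of_nat_diff)

theorem proposition5:
  fixes a01 a10 \<theta> :: real and xt :: nat
  assumes "a01 > 0" and "a10 > 0"
    and "0 < \<theta>" and "\<theta> < 1"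
  shows "CI_prior a01 a10 xt \<theta> =
    (\<Sum>x01 = 0..xt. real (xt choose x01) * (1/2) ^ xt *
       beta_density (a01 + real x01) ((a01 + a10) - a01 + real (xt - x01)) \<theta>)"
  unfolding CI_prior_def sum_distrib_left
proof (rule sum.cong[OF refl])
  fix k assume "k \<in> {0..xt}"
  then have "k \<le> xt" by simp
  have "Beta a01 a10 > 0" "Beta (a01 + real k) (a10 + real (xt - k)) > 0"
    using assms by (simp_all add: Beta_real_pos)
  then have "binom_h k xt \<theta> * beta_density a01 a10 \<theta> * inverse (BF_Co a01 a10 xt k) =
      real (xt choose k) * (1/2) ^ xt * beta_density (a01 + real k) (a10 + real (xt - k)) \<theta>"
    unfolding binom_h_mult_beta_density[OF assms \<open>k \<le> xt\<close>]
      BF_Co_eq[OF assms(1,2) \<open>k \<le> xt\<close>]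
    by (simp add: field_simps del: of_nat_diff)
  then show "beta_density a01 a10 \<theta> * (binom_h k xt \<theta> * inverse (BF_Co a01 a10 xt k)) =
      real (xt choose k) * (1/2) ^ xt *
      beta_density (a01 + real k) ((a01 + a10) - a01 + real (xt - k)) \<theta>"
    by (simp add: mult_ac)
qed

end
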